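(* Let $n\ge2$, $a\ge\sqrt{n-1}$, $f(x)=a|x^{(1)}|+\sum_{i=2}^n x^{(i)}$ on $\mathbb{R}^n$, $0<c_1<c_2<1$, and $\tau=c_1+\frac{(n-1)(c_1-1)}{a^2}$. Let $x_0\in\mathbb{R}^n$ with $x_0^{(1)}\ne0$, and define iteratively $d_k=-\nabla f(x_k)$, $$t_k=\frac{2|x_k^{(1)}|}{(\tau+1)a},\qquad x_{k+1}=x_k+t_kd_k.$$ Then (1) $A(t_k)$ and $W(t_k)$ both hold for every $k$; and (2) if $\tau\le0$, then $f(x_k)$ is unbounded below as $k\to\infty$.
   Context: $x^{(i)}$ is the $i$-th coordinate. Note $-1<\tau<1$. At iteration $k$, the Armijo condition is $A(t)$: $f(x_k+td_k)\le f(x_k)+c_1t\nabla f(x_k)^Td_k$; the Wolfe condition is $W(t)$: $f$ is differentiable at $x_k+td_k$ and $\nabla f(x_k+td_k)^Td_k\ge c_2\nabla f(x_k)^Td_k$. *)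

theory Defs
  imports "HOL-Analysis.Analysis"
begin

text \<open>Gradient of a real-valued function on a Euclidean space (meaningful where f is differentiable).\<close>
definition grad :: "('a::real_inner \<Rightarrow> real) \<Rightarrow> 'a \<Rightarrow> 'a" where
  "grad f x = (THE g. (f has_derivative (\<lambda>h. g \<bullet> h)) (at x))"

definition armijo :: "('a::real_inner \<Rightarrow> real) \<Rightarrow> real \<Rightarrow> 'a \<Rightarrow> 'a \<Rightarrow> real \<Rightarrow> bool" where
  "armijo f c1 x d t \<longleftrightarrow> f (x + t *\<^sub>R d) \<le> f x + c1 * t * (grad f x \<bullet> d)"

definition wolfe :: "('a::real_inner \<Rightarrow> real) \<Rightarrow> real \<Rightarrow> 'a \<Rightarrow> 'a \<Rightarrow> real \<Rightarrow> bool" where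
  "wolfe f c2 x d t \<longleftrightarrow> f differentiable (at (x + t *\<^sub>R d)) \<and>
     grad f (x + t *\<^sub>R d) \<bullet> d \<ge> c2 * (grad f x \<bullet> d)"

end

theory Submission
  imports Defs
begin

text \<open>Away from the hyperplane where the distinguished coordinate vanishes, the function
  is linear with gradient \<open>g = (\<plusminus>a, 1, \<dots>, 1)\<close>, so \<open>g \<bullet> g = a\<^sup>2 + (n - 1)\<close>. The step
  \<open>t\<^sub>k\<close> multiplies that coordinate by \<open>r = (\<tau> - 1)/(\<tau> + 1) < 0\<close>, so each iterate lies on
  the other side of the kink, where the new gradient \<open>g'\<close> satisfies
  \<open>g' \<bullet> g = -a\<^sup>2 + (n - 1) \<le> 0\<close>; this gives the Wolfe condition. The value of \<open>\<tau>\<close> is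
  exactly the one making the Armijo condition an equality. If \<open>\<tau> \<le> 0\<close> then \<open>|r| \<ge> 1\<close>, so
  the step sizes stay bounded away from zero and each step decreases \<open>f\<close> by a fixed
  positive amount.\<close>

definition kinked :: "real \<Rightarrow> 'n::finite \<Rightarrow> real^'n \<Rightarrow> real" where
  "kinked a i y = a * \<bar>y $ i\<bar> + (\<Sum>j\<in>UNIV - {i}. y $ j)"

definition kinked_grad :: "real \<Rightarrow> 'n::finite \<Rightarrow> real^'n \<Rightarrow> real^'n" where
  "kinked_grad a i y = (\<chi> j. if j = i then a * sgn (y $ i) else 1)"

lemma grad_eqI:
  assumes "(f has_derivative (\<lambda>h. g \<bullet> h)) (at x)"
  shows "grad f x = g"
  unfolding grad_def
proof (rule the_equality)
  fix g' assume "(f has_derivative (\<lambda>h. g' \<bullet> h)) (at x)"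
  then have "(\<lambda>h. g' \<bullet> h) = (\<lambda>h. g \<bullet> h)"
    using assms by (rule has_derivative_unique)
  then have "(g' - g) \<bullet> (g' - g) = 0"
    by (metis inner_diff_left diff_self)
  then show "g' = g" by simp
qed (fact assms)

lemma sum_one_Diff_singleton:
  fixes i :: "'n::finite"
  shows "(\<Sum>j\<in>UNIV - {i}. 1::real) = real CARD('n) - 1"
  by (simp add: card_Diff_singleton Suc_leI)

lemma inner_kinked_grad:
  "kinked_grad a i y \<bullet> h = a * sgn (y $ i) * h $ i + (\<Sum>j\<in>UNIV - {i}. h $ j)"
proof -
  have "kinked_grad a i y \<bullet> h = (\<Sum>j\<in>UNIV. (if j = i then a * sgn (y $ i) else 1) * h $ j)"
    by (simp add: kinked_grad_def inner_vec_def)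
  also have "\<dots> = a * sgn (y $ i) * h $ i + (\<Sum>j\<in>UNIV - {i}. h $ j)"
    by (simp add: sum.remove[of UNIV i])
  finally show ?thesis .
qed

lemma inner_kinked_grad_kinked_grad:
  fixes y z :: "real^'n::finite"
  shows "kinked_grad a i y \<bullet> kinked_grad a i z
           = a\<^sup>2 * sgn (y $ i) * sgn (z $ i) + (real CARD('n) - 1)"
  unfolding inner_kinked_grad
  by (simp add: kinked_grad_def sum_one_Diff_singleton power2_eq_square)

lemma kinked_eq_inner_kinked_grad:
  assumes "0 < sgn (y $ i) * z $ i"
  shows "kinked a i z = kinked_grad a i y \<bullet> z"
proof -
  have "\<bar>z $ i\<bar> = sgn (y $ i) * z $ i"
    using assms by (auto simp: sgn_if split: if_splits)
  then show ?thesis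
    by (simp add: kinked_def inner_kinked_grad)
qed

lemma has_derivative_kinked:
  assumes "y $ i \<noteq> 0"
  shows "(kinked a i has_derivative (\<lambda>h. kinked_grad a i y \<bullet> h)) (at y)"
proof (rule has_derivative_transform_within_open)
  show "((\<lambda>z. kinked_grad a i y \<bullet> z) has_derivative (\<lambda>h. kinked_grad a i y \<bullet> h)) (at y)"
    by (intro bounded_linear_imp_has_derivative bounded_linear_inner_right)
  show "open {z. 0 < sgn (y $ i) * z $ i}"
    by (intro open_Collect_less continuous_intros)
  show "y \<in> {z. 0 < sgn (y $ i) * z $ i}"
    using assms by (simp add: sgn_if)
qed (simp add: kinked_eq_inner_kinked_grad)

lemma grad_kinked: "y $ i \<noteq> 0 \<Longrightarrow> grad (kinked a i) y = kinked_grad a i y"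
  by (intro grad_eqI has_derivative_kinked)

lemma differentiable_kinked: "y $ i \<noteq> 0 \<Longrightarrow> kinked a i differentiable (at y)"
  using has_derivative_kinked unfolding differentiable_def by blast

lemma kinked_step:
  fixes y :: "real^'n::finite"
  assumes a: "0 < a" and tau: "-1 < tau" "tau < 1"
    and s: "s = 2 * \<bar>y $ i\<bar> / ((tau + 1) * a)"
  shows "(y - s *\<^sub>R kinked_grad a i y) $ i = (tau - 1) / (tau + 1) * y $ i"
    and "kinked a i (y - s *\<^sub>R kinked_grad a i y)
           = kinked a i y - s * (tau * a\<^sup>2 + (real CARD('n) - 1))"
proof -
  have step_abs: "s * ((tau + 1) * a) = 2 * \<bar>y $ i\<bar>"
    using a tau unfolding s by simp
  then have abs_y: "\<bar>y $ i\<bar> = s * (1 + tau) * a / 2"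
    by (simp add: algebra_simps)
  have "1 + tau \<noteq> 0"
    using tau by simp
  have "s * a * sgn (y $ i) * (1 + tau) = 2 * y $ i"
    using step_abs sgn_mult_abs[of "y $ i"] by (metis mult.commute mult.left_commute add.commute)
  then show coord: "(y - s *\<^sub>R kinked_grad a i y) $ i = (tau - 1) / (tau + 1) * y $ i"
    using \<open>1 + tau \<noteq> 0\<close> by (simp add: kinked_grad_def field_simps)
  have "\<bar>(tau - 1) / (tau + 1)\<bar> = (1 - tau) / (1 + tau)"
    using tau by (simp add: abs_of_neg abs_of_pos add.commute)
  then have "a * \<bar>(tau - 1) / (tau + 1) * y $ i\<bar> = a * ((1 - tau) / (1 + tau)) * \<bar>y $ i\<bar>"
    by (simp only: abs_mult mult.assoc)
  also have "\<dots> = a * \<bar>y $ i\<bar> - tau * a\<^sup>2 * s"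
    using \<open>1 + tau \<noteq> 0\<close> unfolding abs_y by (simp add: field_simps power2_eq_square)
  finally have "a * \<bar>(tau - 1) / (tau + 1) * y $ i\<bar> = a * \<bar>y $ i\<bar> - tau * a\<^sup>2 * s" .
  moreover have "(\<Sum>j\<in>UNIV - {i}. (y - s *\<^sub>R kinked_grad a i y) $ j)
                   = (\<Sum>j\<in>UNIV - {i}. y $ j) - s * (real CARD('n) - 1)"
  proof -
    have "(\<Sum>j\<in>UNIV - {i}. (y - s *\<^sub>R kinked_grad a i y) $ j) = (\<Sum>j\<in>UNIV - {i}. y $ j - s)"
      by (rule sum.cong) (auto simp: kinked_grad_def)
    then show ?thesis
      by (simp add: sum_subtractf card_Diff_singleton Suc_leI)
  qed
  ultimately show "kinked a i (y - s *\<^sub>R kinked_grad a i y)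
                     = kinked a i y - s * (tau * a\<^sup>2 + (real CARD('n) - 1))"
    by (simp only: kinked_def coord) (simp add: algebra_simps)
qed

lemma kinked_tau_bounds:
  fixes a c1 N :: real
  assumes "0 < c1" "c1 < 1" "1 \<le> N" "N \<le> a\<^sup>2"
  shows "-1 < c1 + N * (c1 - 1) / a\<^sup>2" and "c1 + N * (c1 - 1) / a\<^sup>2 < 1"
proof -
  have "a\<^sup>2 > 0"
    using assms by linarith
  have "N * (1 - c1) \<le> a\<^sup>2 * (1 - c1)"
    using assms by (intro mult_right_mono) auto
  then have "c1 - 1 \<le> N * (c1 - 1) / a\<^sup>2"
    using \<open>a\<^sup>2 > 0\<close> by (simp add: field_simps)
  then show "-1 < c1 + N * (c1 - 1) / a\<^sup>2"
    using assms by linarith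
  have "N * (c1 - 1) / a\<^sup>2 \<le> 0"
    using assms \<open>a\<^sup>2 > 0\<close> by (intro divide_nonpos_pos mult_nonneg_nonpos) auto
  then show "c1 + N * (c1 - 1) / a\<^sup>2 < 1"
    using assms by linarith
qed

lemma inner_grad_kinked_self:
  fixes y :: "real^'n::finite"
  assumes "y $ i \<noteq> 0"
  shows "grad (kinked a i) y \<bullet> grad (kinked a i) y = a\<^sup>2 + (real CARD('n) - 1)"
  using assms by (simp add: grad_kinked inner_kinked_grad_kinked_grad sgn_mult_self_eq)

lemma kinked_step_armijo_eq:
  fixes y :: "real^'n::finite"
  assumes a: "0 < a" and tau: "-1 < tau" "tau < 1"
    and tau_def: "tau = c1 + (real CARD('n) - 1) * (c1 - 1) / a\<^sup>2"
    and y: "y $ i \<noteq> 0" and s: "s = 2 * \<bar>y $ i\<bar> / ((tau + 1) * a)"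
  shows "kinked a i (y + s *\<^sub>R - grad (kinked a i) y)
           = kinked a i y + c1 * s * (grad (kinked a i) y \<bullet> - grad (kinked a i) y)"
proof -
  have "kinked a i (y + s *\<^sub>R - grad (kinked a i) y)
          = kinked a i y - s * (tau * a\<^sup>2 + (real CARD('n) - 1))"
    using kinked_step(2)[OF a tau s] y by (simp add: grad_kinked)
  also have "tau * a\<^sup>2 + (real CARD('n) - 1) = c1 * (a\<^sup>2 + (real CARD('n) - 1))"
    using a unfolding tau_def by (simp add: field_simps)
  finally show ?thesis
    using y by (simp add: inner_grad_kinked_self algebra_simps)
qed

lemma kinked_step_wolfe:
  fixes y :: "real^'n::finite"
  assumes a: "0 < a" "real CARD('n) - 1 \<le> a\<^sup>2" and tau: "-1 < tau" "tau < 1"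
    and c2: "0 \<le> c2"
    and y: "y $ i \<noteq> 0" and s: "s = 2 * \<bar>y $ i\<bar> / ((tau + 1) * a)"
  shows "wolfe (kinked a i) c2 y (- grad (kinked a i) y) s"
proof -
  let ?y' = "y + s *\<^sub>R - grad (kinked a i) y"
  define r where "r = (tau - 1) / (tau + 1)"
  have "?y' $ i = r * y $ i"
    using kinked_step(1)[OF a(1) tau s] y by (simp add: grad_kinked r_def)
  moreover have "r < 0"
    using tau by (simp add: r_def divide_neg_pos)
  ultimately have "sgn (?y' $ i) = - sgn (y $ i)" and "?y' $ i \<noteq> 0"
    using y by (simp_all add: sgn_mult)
  then have "grad (kinked a i) ?y' \<bullet> - grad (kinked a i) y = a\<^sup>2 - (real CARD('n) - 1)"
    using y by (simp add: grad_kinked inner_kinked_grad_kinked_grad sgn_mult_self_eq)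
  moreover have "c2 * (grad (kinked a i) y \<bullet> - grad (kinked a i) y) \<le> 0"
    using c2 by simp
  ultimately show ?thesis
    unfolding wolfe_def using differentiable_kinked[OF \<open>?y' $ i \<noteq> 0\<close>] a by simp
qed

lemma geometric_while_nonzero:
  fixes u :: "nat \<Rightarrow> real"
  assumes "r \<noteq> 0" "u 0 \<noteq> 0" "\<And>k. u k \<noteq> 0 \<Longrightarrow> u (Suc k) = r * u k"
  shows "u k = r ^ k * u 0"
proof (induction k)
  case (Suc k)
  then have "u k \<noteq> 0"
    using assms(1,2) by simp
  then show ?case
    using Suc assms(3) by simp
qed simp

lemma not_bdd_below_uniform_decrease:
  fixes g :: "nat \<Rightarrow> real"
  assumes "0 < \<delta>" "\<And>k. g (Suc k) \<le> g k - \<delta>"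
  shows "\<not> bdd_below (range g)"
proof
  assume "bdd_below (range g)"
  then obtain m where m: "\<And>k. m \<le> g k"
    by (auto simp: bdd_below_def)
  have bound: "g k \<le> g 0 - real k * \<delta>" for k
  proof (induction k)
    case (Suc k)
    have "real (Suc k) * \<delta> = real k * \<delta> + \<delta>"
      by (simp add: algebra_simps)
    then show ?case
      using Suc assms(2)[of k] by linarith
  qed simp
  obtain k :: nat where "real k * \<delta> > g 0 - m"
    using reals_Archimedean3[OF assms(1)] by blast
  then show False
    using bound[of k] m[of k] by linarith
qed

lemma kinked_iterate_coord:
  fixes x :: "nat \<Rightarrow> real^'n::finite"
  assumes a: "0 < a" and tau: "-1 < tau" "tau < 1" and x0: "x 0 $ i \<noteq> 0"
    and x_Suc: "\<And>k. x (Suc k) = x k + s k *\<^sub>R - grad (kinked a i) (x k)"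
    and s: "\<And>k. s k = 2 * \<bar>x k $ i\<bar> / ((tau + 1) * a)"
  shows "x k $ i = ((tau - 1) / (tau + 1)) ^ k * x 0 $ i"
proof (rule geometric_while_nonzero[where u = "\<lambda>k. x k $ i"])
  show "(tau - 1) / (tau + 1) \<noteq> 0"
    using tau by simp
  show "x (Suc k) $ i = (tau - 1) / (tau + 1) * x k $ i" if "x k $ i \<noteq> 0" for k
    using kinked_step(1)[OF a tau s[of k]] that unfolding x_Suc by (simp add: grad_kinked)
qed (fact x0)

lemma kinked_iterate_not_bdd_below:
  fixes x :: "nat \<Rightarrow> real^'n::finite"
  assumes a: "0 < a" and tau: "-1 < tau" "tau \<le> 0"
    and tau_def: "tau = c1 + (real CARD('n) - 1) * (c1 - 1) / a\<^sup>2" and c1: "0 < c1"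
    and x0: "x 0 $ i \<noteq> 0"
    and x_Suc: "\<And>k. x (Suc k) = x k + s k *\<^sub>R - grad (kinked a i) (x k)"
    and s: "\<And>k. s k = 2 * \<bar>x k $ i\<bar> / ((tau + 1) * a)"
  shows "\<not> bdd_below (range (\<lambda>k. kinked a i (x k)))"
proof (rule not_bdd_below_uniform_decrease)
  let ?r = "(tau - 1) / (tau + 1)" and ?N = "real CARD('n) - 1"
  have tau1: "tau < 1"
    using tau by simp
  have coord: "x k $ i = ?r ^ k * x 0 $ i" for k
    using kinked_iterate_coord[OF a tau(1) tau1 x0 x_Suc s] .
  have "1 \<le> \<bar>?r\<bar>"
    using tau by (simp add: abs_divide)
  then have "\<bar>x 0 $ i\<bar> \<le> \<bar>x k $ i\<bar>" for k
    using mult_right_mono[OF one_le_power[of "\<bar>?r\<bar>" k] abs_ge_zero[of "x 0 $ i"]]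
    by (simp add: coord[of k] abs_mult power_abs)
  then have "s 0 \<le> s k" for k
    using tau a unfolding s by (auto intro!: divide_right_mono)
  moreover have "0 < a\<^sup>2 + ?N"
    using a by (simp add: add_pos_nonneg)
  ultimately have step_bound: "c1 * s 0 * (a\<^sup>2 + ?N) \<le> c1 * s k * (a\<^sup>2 + ?N)" for k
    using c1 by (intro mult_right_mono mult_left_mono) auto
  have "x k $ i \<noteq> 0" for k
    using coord[of k] tau x0 by simp
  then show "kinked a i (x (Suc k)) \<le> kinked a i (x k) - c1 * s 0 * (a\<^sup>2 + ?N)" for k
    using kinked_step_armijo_eq[OF a tau(1) tau1 tau_def _ s, of k] step_bound[of k]
    by (simp add: x_Suc inner_grad_kinked_self algebra_simps)
  show "0 < c1 * s 0 * (a\<^sup>2 + ?N)"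
    using \<open>0 < a\<^sup>2 + ?N\<close> c1 a tau x0 by (simp add: s)
qed

theorem theorem2:
  fixes a c1 c2 tau :: real
    and i1 :: "'n::finite"
    and f :: "real^'n \<Rightarrow> real"
    and x d :: "nat \<Rightarrow> real^'n"
    and t :: "nat \<Rightarrow> real"
    and x0 :: "real^'n"
  assumes n2: "CARD('n) \<ge> 2"
    and a_ge: "a \<ge> sqrt (real CARD('n) - 1)"
    and f_def: "f = (\<lambda>y. a * \<bar>y $ i1\<bar> + (\<Sum>i\<in>UNIV - {i1}. y $ i))"
    and c: "0 < c1" "c1 < c2" "c2 < 1"
    and tau_def: "tau = c1 + (real CARD('n) - 1) * (c1 - 1) / a\<^sup>2"
    and x0_nz: "x0 $ i1 \<noteq> 0"
    and x_0: "x 0 = x0"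
    and d_def: "\<And>k. d k = - grad f (x k)"
    and t_def: "\<And>k. t k = 2 * \<bar>x k $ i1\<bar> / ((tau + 1) * a)"
    and x_Suc: "\<And>k. x (Suc k) = x k + t k *\<^sub>R d k"
  shows "(\<forall>k. armijo f c1 (x k) (d k) (t k) \<and> wolfe f c2 (x k) (d k) (t k))
         \<and> (tau \<le> 0 \<longrightarrow> \<not> bdd_below (range (\<lambda>k. f (x k))))"
proof -
  define N where "N = real CARD('n) - 1"
  have N: "1 \<le> N"
    using n2 by (simp add: N_def)
  then have "1 \<le> sqrt N"
    by simp
  then have a: "0 < a" "N \<le> a\<^sup>2"
    using a_ge sqrt_le_D[of N a] unfolding N_def by linarith+
  have tau: "-1 < tau" "tau < 1"
    using kinked_tau_bounds[OF c(1) _ N a(2)] c unfolding tau_def N_def by auto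
  have f: "f = kinked a i1"
    unfolding f_def kinked_def by blast
  have iterate: "x (Suc k) = x k + t k *\<^sub>R - grad (kinked a i1) (x k)" for k
    using x_Suc d_def f by simp
  have "x 0 $ i1 \<noteq> 0"
    using x_0 x0_nz by simp
  have nz: "x k $ i1 \<noteq> 0" for k
    using kinked_iterate_coord[OF a(1) tau \<open>x 0 $ i1 \<noteq> 0\<close> iterate t_def, of k]
      \<open>x 0 $ i1 \<noteq> 0\<close> tau by simp
  have "armijo f c1 (x k) (d k) (t k) \<and> wolfe f c2 (x k) (d k) (t k)" for k
    using kinked_step_armijo_eq[OF a(1) tau tau_def nz t_def]
      kinked_step_wolfe[OF a(1) _ tau _ nz t_def] a(2) c
    unfolding armijo_def f d_def N_def by auto
  moreover have "\<not> bdd_below (range (\<lambda>k. f (x k)))" if "tau \<le> 0"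
    using kinked_iterate_not_bdd_below[OF a(1) tau(1) that tau_def c(1)
        \<open>x 0 $ i1 \<noteq> 0\<close> iterate t_def] f by simp
  ultimately show ?thesis
    by blast
qed

end
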